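(* Let $T\in(0,\infty]$ and let $u(x,t)=(u_1,u_2)$, $x=(x_1,x_2)\in\mathbb{R}^2$, $t\in[0,T)$, be a smooth velocity field given by a smooth stream function $\psi(x,t)$ via $u=\nabla^{\perp}\psi=\left(-\frac{\partial\psi}{\partial x_2},\frac{\partial\psi}{\partial x_1}\right)$, and let $\theta$ be a smooth solution of $(\partial_t+u\cdot\nabla)\theta=0$ on $[0,T)$. Assume the fluid forms a sharp front at time $T$ (in the sense defined in the context), with curves $x_2=f_\pm(x_1,t)$, $x_1\in[a,b]$. Then for all $t\in[0,T)$, $$\frac{d}{dt}\int_a^b\big[f_+(x_1,t)-f_-(x_1,t)\big]\,dx_1=\psi(b,f_+(b,t),t)-\psi(b,f_-(b,t),t)+\psi(a,f_-(a,t),t)-\psi(a,f_+(a,t),t).$$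
   Context: Sharp front at time $T$: there are an interval $[a,b]$ with $a<b$ and functions $f_\pm\in C^1([a,b]\times[0,T))$ such that (i) $f_-(x_1,t)<f_+(x_1,t)$ for all $x_1\in[a,b]$, $t\in[0,T)$; (ii) the arcs $\Gamma_\pm(t)=\{(x_1,x_2): x_2=f_\pm(x_1,t),\ x_1\in[a,b]\}$ move with the fluid, i.e. $u_2(x_1,x_2,t)=\frac{\partial f_\pm}{\partial x_1}(x_1,t)\,u_1(x_1,x_2,t)+\frac{\partial f_\pm}{\partial t}(x_1,t)$ at $x_2=f_\pm(x_1,t)$, for all $x_1\in[a,b]$, $t\in[0,T)$; (iii) $\lim_{t\to T^-}(f_+(x_1,t)-f_-(x_1,t))=0$ for all $x_1\in[a,b]$; and (iv) $f_+(x_1,t)-f_-(x_1,t)$ is bounded on $[a,b]\times[0,T)$. *)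

theory Defs
  imports "HOL-Analysis.Analysis"
begin

definition dpart :: "'a::euclidean_space \<Rightarrow> ('a \<Rightarrow> real) \<Rightarrow> 'a \<Rightarrow> real" where
  "dpart v g x = deriv (\<lambda>s. g (x + s *\<^sub>R v)) 0"

definition iter_dpart :: "'a::euclidean_space list \<Rightarrow> ('a \<Rightarrow> real) \<Rightarrow> 'a \<Rightarrow> real" where
  "iter_dpart vs g = foldr dpart vs g"

definition C_infinity_on :: "'a::euclidean_space set \<Rightarrow> ('a \<Rightarrow> real) \<Rightarrow> bool" where
  "C_infinity_on U g \<longleftrightarrow> open U \<and>
     (\<forall>vs. set vs \<subseteq> Basis \<longrightarrow>
        continuous_on U (iter_dpart vs g) \<and>
        (\<forall>v\<in>Basis. \<forall>x\<in>U. (\<lambda>s. iter_dpart vs g (x + s *\<^sub>R v)) differentiable (at 0)))"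

definition time_int :: "ereal \<Rightarrow> real set" where
  "time_int T = {t. 0 \<le> t \<and> ereal t < T}"

definition before :: "ereal \<Rightarrow> real filter" where
  "before T = (if T = \<infinity> then at_top else at_left (real_of_ereal T))"

(* f \<in> C^1(S), S \<subseteq> R^2, with partial derivatives D1 (w.r.t. x1) and Dt (w.r.t. t),
   derivatives taken within S (one-sided at the boundary) and continuous on S *)
definition C1_with_partials ::
    "(real \<times> real) set \<Rightarrow> (real \<Rightarrow> real \<Rightarrow> real) \<Rightarrow> (real \<Rightarrow> real \<Rightarrow> real) \<Rightarrow> (real \<Rightarrow> real \<Rightarrow> real) \<Rightarrow> bool" where
  "C1_with_partials S f D1 Dt \<longleftrightarrow>
     (\<forall>p\<in>S. ((\<lambda>q. f (fst q) (snd q)) has_derivative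
               (\<lambda>h. fst h * D1 (fst p) (snd p) + snd h * Dt (fst p) (snd p))) (at p within S))
     \<and> continuous_on S (\<lambda>q. D1 (fst q) (snd q)) \<and> continuous_on S (\<lambda>q. Dt (fst q) (snd q))"

definition sharp_front ::
    "(real \<times> real \<times> real \<Rightarrow> real) \<Rightarrow> (real \<times> real \<times> real \<Rightarrow> real) \<Rightarrow> ereal \<Rightarrow> real \<Rightarrow> real \<Rightarrow>
     (real \<Rightarrow> real \<Rightarrow> real) \<Rightarrow> (real \<Rightarrow> real \<Rightarrow> real) \<Rightarrow> bool" where
  "sharp_front u1 u2 T a b fm fp \<longleftrightarrow> a < b \<and>
     (\<exists>Dm1 Dmt Dp1 Dpt.
        C1_with_partials ({a..b} \<times> time_int T) fm Dm1 Dmt \<and>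
        C1_with_partials ({a..b} \<times> time_int T) fp Dp1 Dpt \<and>
        (\<forall>x1\<in>{a..b}. \<forall>t\<in>time_int T. fm x1 t < fp x1 t) \<and>
        (\<forall>x1\<in>{a..b}. \<forall>t\<in>time_int T.
           u2 (x1, fm x1 t, t) = Dm1 x1 t * u1 (x1, fm x1 t, t) + Dmt x1 t \<and>
           u2 (x1, fp x1 t, t) = Dp1 x1 t * u1 (x1, fp x1 t, t) + Dpt x1 t)) \<and>
     (\<forall>x1\<in>{a..b}. ((\<lambda>t. fp x1 t - fm x1 t) \<longlongrightarrow> 0) (before T)) \<and>
     (\<exists>M. \<forall>x1\<in>{a..b}. \<forall>t\<in>time_int T. \<bar>fp x1 t - fm x1 t\<bar> \<le> M)"

end

theory Submission
  imports Defs
begin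

text \<open>Only the kinematic condition (ii) and the smoothness of \<open>\<psi>\<close> and \<open>f\<^sub>\<plusminus>\<close> matter.
Differentiating under the integral, the rate of change of the area is
\<open>\<integral>\<^sub>a\<^sup>b (\<partial>\<^sub>t f\<^sub>+ - \<partial>\<^sub>t f\<^sub>-) dx\<^sub>1\<close>. Along an arc \<open>x\<^sub>2 = f(x\<^sub>1, t)\<close> moving with the flow
\<open>u = \<nabla>\<^sup>\<bottom>\<psi>\<close>, condition (ii) reads \<open>\<partial>\<^sub>t f = \<partial>\<^sub>1\<psi> + \<partial>\<^sub>1f \<partial>\<^sub>2\<psi>\<close>, the total
\<open>x\<^sub>1\<close>-derivative of \<open>\<psi>(x\<^sub>1, f(x\<^sub>1, t), t)\<close>; so the fundamental theorem of calculus turns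
each integral into a difference of stream function values at the end points.\<close>

lemma has_derivative_of_partials_real2:
  fixes F P1 P2 :: "real \<Rightarrow> real \<Rightarrow> real"
  assumes "\<And>x y. ((\<lambda>s. F s y) has_real_derivative P1 x y) (at x)"
    and "\<And>x y. ((\<lambda>s. F x s) has_real_derivative P2 x y) (at y)"
    and "continuous_on UNIV (\<lambda>q. P2 (fst q) (snd q))"
  shows "((\<lambda>q. F (fst q) (snd q)) has_derivative
           (\<lambda>h. fst h * P1 (fst p) (snd p) + snd h * P2 (fst p) (snd p))) (at p)"
proof -
  obtain x y where p: "p = (x, y)" by fastforce
  have "((\<lambda>(x, y). F x y) has_derivative
      (\<lambda>(hx, hy). hx * P1 x y + blinfun_mult_left (P2 x y) hy)) (at (x, y) within UNIV \<times> UNIV)"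
  proof (rule has_derivative_partialsI[where fy="\<lambda>x y. blinfun_mult_left (P2 x y)"])
    show "((\<lambda>s. F s y) has_derivative (\<lambda>h. h * P1 x y)) (at x within UNIV)"
      using assms(1) by (simp add: has_field_derivative_def mult_commute_abs)
    show "((\<lambda>s. F x' s) has_derivative blinfun_mult_left (P2 x' y')) (at y' within UNIV)" for x' y'
      using assms(2) by (simp add: has_field_derivative_def mult_commute_abs)
    show "continuous (at (x, y) within UNIV \<times> UNIV) (\<lambda>(x, y). blinfun_mult_left (P2 x y))"
      using bounded_linear.isCont[OF bounded_linear_blinfun_mult_left,
          where g="\<lambda>q. P2 (fst q) (snd q)" and a="(x, y)"] assms(3)
      by (simp add: case_prod_beta' continuous_on_eq_continuous_at)
  qed auto
  then show ?thesis by (simp add: p case_prod_beta')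
qed

lemma has_integral_derivative_along_graph:
  fixes \<Psi> :: "real \<times> real \<Rightarrow> real"
  assumes "a \<le> b"
    and g: "\<And>x. x \<in> {a..b} \<Longrightarrow> (g has_real_derivative g' x) (at x within {a..b})"
    and \<Psi>: "\<And>p. (\<Psi> has_derivative (\<lambda>h. fst h * Q1 p + snd h * Q2 p)) (at p)"
  shows "((\<lambda>x. Q1 (x, g x) + g' x * Q2 (x, g x)) has_integral \<Psi> (b, g b) - \<Psi> (a, g a)) {a..b}"
proof (rule fundamental_theorem_of_calculus[OF \<open>a \<le> b\<close>])
  fix x assume x: "x \<in> {a..b}"
  have "((\<lambda>x. (x, g x)) has_derivative (\<lambda>h. (h, g' x * h))) (at x within {a..b})"
    using g[OF x] by (intro has_derivative_Pair has_derivative_ident) (simp add: has_field_derivative_def)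
  from has_derivative_compose[OF this \<Psi>]
  show "((\<lambda>x. \<Psi> (x, g x)) has_vector_derivative Q1 (x, g x) + g' x * Q2 (x, g x)) (at x within {a..b})"
    unfolding has_vector_derivative_def
    by (rule has_derivative_eq_rhs) (simp add: fun_eq_iff algebra_simps)
qed

lemma C1_with_partials_diff:
  assumes f: "C1_with_partials S f D1 Dt" and g: "C1_with_partials S g E1 Et"
  shows "C1_with_partials S (\<lambda>x t. f x t - g x t) (\<lambda>x t. D1 x t - E1 x t) (\<lambda>x t. Dt x t - Et x t)"
  unfolding C1_with_partials_def
proof (intro conjI ballI)
  fix p assume "p \<in> S"
  with f g have "((\<lambda>q. f (fst q) (snd q) - g (fst q) (snd q)) has_derivative
      (\<lambda>h. (fst h * D1 (fst p) (snd p) + snd h * Dt (fst p) (snd p))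
         - (fst h * E1 (fst p) (snd p) + snd h * Et (fst p) (snd p)))) (at p within S)"
    unfolding C1_with_partials_def by (intro has_derivative_diff) auto
  then show "((\<lambda>q. f (fst q) (snd q) - g (fst q) (snd q)) has_derivative
      (\<lambda>h. fst h * (D1 (fst p) (snd p) - E1 (fst p) (snd p))
         + snd h * (Dt (fst p) (snd p) - Et (fst p) (snd p))))
      (at p within S)"
    by (rule has_derivative_eq_rhs) (simp add: fun_eq_iff algebra_simps)
qed (use f g in \<open>auto simp: C1_with_partials_def intro!: continuous_on_diff\<close>)

lemma C1_with_partials_has_derivative_fst:
  assumes f: "C1_with_partials (A \<times> I) f D1 Dt" and x: "x \<in> A" and t: "t \<in> I"
  shows "((\<lambda>x. f x t) has_real_derivative D1 x t) (at x within A)"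
proof -
  have "((\<lambda>x. (x, t)) has_derivative (\<lambda>h. (h, 0))) (at x within A)"
    by (auto intro!: derivative_eq_intros)
  from has_derivative_in_compose2[OF f[unfolded C1_with_partials_def, THEN conjunct1, rule_format] _ x this]
  show ?thesis using t by (simp add: image_subset_iff has_field_derivative_def mult_commute_abs)
qed

lemma C1_with_partials_has_derivative_snd:
  assumes f: "C1_with_partials (A \<times> I) f D1 Dt" and x: "x \<in> A" and t: "t \<in> I"
  shows "((\<lambda>t. f x t) has_real_derivative Dt x t) (at t within I)"
proof -
  have "((\<lambda>t. (x, t)) has_derivative (\<lambda>h. (0, h))) (at t within I)"
    by (auto intro!: derivative_eq_intros)
  from has_derivative_in_compose2[OF f[unfolded C1_with_partials_def, THEN conjunct1, rule_format] _ t this]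
  show ?thesis using x by (simp add: image_subset_iff has_field_derivative_def mult_commute_abs)
qed

lemma has_real_derivative_integral_C1_with_partials:
  assumes f: "C1_with_partials ({a..b} \<times> I) f D1 Dt" and "convex I" and "t \<in> I"
  shows "((\<lambda>s. integral {a..b} (\<lambda>x. f x s)) has_real_derivative integral {a..b} (\<lambda>x. Dt x t))
           (at t within I)"
proof -
  have "continuous_on ({a..b} \<times> I) (\<lambda>q. Dt (fst q) (snd q))"
    using f by (simp add: C1_with_partials_def)
  then have "continuous_on (I \<times> {a..b}) (\<lambda>q. Dt (fst (snd q, fst q)) (snd (snd q, fst q)))"
    by (rule continuous_on_compose2) (auto intro!: continuous_intros)
  then have "continuous_on (I \<times> {a..b}) (\<lambda>(s, x). Dt x s)"
    by (simp add: case_prod_beta')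
  moreover have "(\<lambda>x. f x s) integrable_on {a..b}" if "s \<in> I" for s
    using C1_with_partials_has_derivative_fst[OF f _ that]
    by (intro integrable_continuous_interval DERIV_continuous_on) blast
  ultimately have "((\<lambda>s. integral (cbox a b) (\<lambda>x. f x s)) has_real_derivative
      integral (cbox a b) (\<lambda>x. Dt x t)) (at t within I)"
    using C1_with_partials_has_derivative_snd[OF f] assms(2,3)
    by (intro leibniz_rule_field_derivative[where f="\<lambda>s x. f x s" and fx="\<lambda>s x. Dt x s"]) auto
  then show ?thesis by simp
qed

lemma C_infinity_on_has_real_derivative_dpart:
  assumes "C_infinity_on U g" and "v \<in> Basis" and "x \<in> U"
  shows "((\<lambda>s. g (x + s *\<^sub>R v)) has_real_derivative dpart v g x) (at 0)"
proof -
  have "(\<lambda>s. iter_dpart [] g (x + s *\<^sub>R v)) differentiable (at 0)"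
    using assms unfolding C_infinity_on_def by (metis empty_set empty_subsetI)
  then show ?thesis
    by (simp add: dpart_def iter_dpart_def DERIV_deriv_iff_real_differentiable)
qed

lemma C_infinity_on_continuous_on_dpart:
  assumes "C_infinity_on U g" and "v \<in> Basis"
  shows "continuous_on U (dpart v g)"
proof -
  have "continuous_on U (iter_dpart [v] g)"
    using assms unfolding C_infinity_on_def by simp
  then show ?thesis by (simp add: iter_dpart_def)
qed

lemma C_infinity_on_time_slice_has_derivative:
  fixes \<psi> :: "real \<times> real \<times> real \<Rightarrow> real"
  assumes \<psi>: "C_infinity_on U \<psi>" and U: "\<And>x1 x2. (x1, x2, t) \<in> U"
  shows "((\<lambda>q. \<psi> (fst q, snd q, t)) has_derivative
           (\<lambda>h. fst h * dpart (1, 0, 0) \<psi> (fst p, snd p, t) + snd h * dpart (0, 1, 0) \<psi> (fst p, snd p, t)))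
           (at p)"
proof (rule has_derivative_of_partials_real2)
  have B: "(1, 0, 0) \<in> (Basis :: (real \<times> real \<times> real) set)"
    "(0, 1, 0) \<in> (Basis :: (real \<times> real \<times> real) set)"
    by (simp_all add: Basis_prod_def zero_prod_def)
  fix x y :: real
  have "((\<lambda>s. \<psi> (s + x, y, t)) has_real_derivative dpart (1, 0, 0) \<psi> (x, y, t)) (at 0)"
    using C_infinity_on_has_real_derivative_dpart[OF \<psi> B(1) U[of x y]] by (simp add: add.commute)
  then show "((\<lambda>s. \<psi> (s, y, t)) has_real_derivative dpart (1, 0, 0) \<psi> (x, y, t)) (at x)"
    using DERIV_shift[of "\<lambda>s. \<psi> (s, y, t)" _ 0 x] by simp
  have "((\<lambda>s. \<psi> (x, s + y, t)) has_real_derivative dpart (0, 1, 0) \<psi> (x, y, t)) (at 0)"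
    using C_infinity_on_has_real_derivative_dpart[OF \<psi> B(2) U[of x y]] by (simp add: add.commute)
  then show "((\<lambda>s. \<psi> (x, s, t)) has_real_derivative dpart (0, 1, 0) \<psi> (x, y, t)) (at y)"
    using DERIV_shift[of "\<lambda>s. \<psi> (x, s, t)" _ 0 y] by simp
  show "continuous_on UNIV (\<lambda>q. dpart (0, 1, 0) \<psi> (fst q, snd q, t))"
    using U by (intro continuous_on_compose2[OF C_infinity_on_continuous_on_dpart[OF \<psi> B(2)]])
      (auto intro!: continuous_intros)
qed

lemma convex_time_int: "convex (time_int T)"
  unfolding is_interval_convex_1[symmetric] is_interval_1 time_int_def
  by (auto intro: le_less_trans[of _ "ereal _"])

lemma has_integral_velocity_of_material_arc:
  fixes \<psi> :: "real \<times> real \<times> real \<Rightarrow> real"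
  assumes \<psi>: "C_infinity_on U \<psi>" and U: "\<And>x1 x2. (x1, x2, t) \<in> U"
    and f: "C1_with_partials ({a..b} \<times> I) f D1 Dt" and "t \<in> I" and "a \<le> b"
    and moves: "\<And>x. x \<in> {a..b} \<Longrightarrow>
      Dt x t = dpart (1, 0, 0) \<psi> (x, f x t, t) + D1 x t * dpart (0, 1, 0) \<psi> (x, f x t, t)"
  shows "((\<lambda>x. Dt x t) has_integral \<psi> (b, f b t, t) - \<psi> (a, f a t, t)) {a..b}"
proof (rule has_integral_eq)
  from has_integral_derivative_along_graph[OF \<open>a \<le> b\<close> C1_with_partials_has_derivative_fst[OF f _ \<open>t \<in> I\<close>]
      C_infinity_on_time_slice_has_derivative[OF \<psi> U]]
  show "((\<lambda>x. dpart (1, 0, 0) \<psi> (x, f x t, t) + D1 x t * dpart (0, 1, 0) \<psi> (x, f x t, t))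
      has_integral \<psi> (b, f b t, t) - \<psi> (a, f a t, t)) {a..b}"
    by simp
qed (simp add: moves)

theorem lemma1:
  fixes T :: ereal and a b :: real
    and \<psi> \<theta> u1 u2 :: "real \<times> real \<times> real \<Rightarrow> real"
    and fm fp :: "real \<Rightarrow> real \<Rightarrow> real"
  assumes T_pos: "T > 0"
    and psi_smooth: "\<exists>U. {(x1, x2, t). t \<in> time_int T} \<subseteq> U \<and> C_infinity_on U \<psi>"
    and u1_def: "\<forall>x1 x2 t. t \<in> time_int T \<longrightarrow> u1 (x1, x2, t) = - dpart (0, 1, 0) \<psi> (x1, x2, t)"
    and u2_def: "\<forall>x1 x2 t. t \<in> time_int T \<longrightarrow> u2 (x1, x2, t) = dpart (1, 0, 0) \<psi> (x1, x2, t)"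
    and theta_smooth: "\<exists>U. {(x1, x2, t). t \<in> time_int T} \<subseteq> U \<and> C_infinity_on U \<theta>"
    and transport: "\<forall>x1 x2 t. t \<in> time_int T \<longrightarrow>
         dpart (0, 0, 1) \<theta> (x1, x2, t) + u1 (x1, x2, t) * dpart (1, 0, 0) \<theta> (x1, x2, t)
           + u2 (x1, x2, t) * dpart (0, 1, 0) \<theta> (x1, x2, t) = 0"
    and front: "sharp_front u1 u2 T a b fm fp"
  shows "\<forall>t\<in>time_int T.
           ((\<lambda>s. integral {a..b} (\<lambda>x1. fp x1 s - fm x1 s)) has_real_derivative
              (\<psi> (b, fp b t, t) - \<psi> (b, fm b t, t) + \<psi> (a, fm a t, t) - \<psi> (a, fp a t, t)))
             (at t within time_int T)"
proof
  fix t assume t: "t \<in> time_int T"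
  obtain Dm1 Dmt Dp1 Dpt where "a < b"
    and C1m: "C1_with_partials ({a..b} \<times> time_int T) fm Dm1 Dmt"
    and C1p: "C1_with_partials ({a..b} \<times> time_int T) fp Dp1 Dpt"
    and kinematic: "\<forall>x1\<in>{a..b}. \<forall>t\<in>time_int T.
           u2 (x1, fm x1 t, t) = Dm1 x1 t * u1 (x1, fm x1 t, t) + Dmt x1 t \<and>
           u2 (x1, fp x1 t, t) = Dp1 x1 t * u1 (x1, fp x1 t, t) + Dpt x1 t"
    using front unfolding sharp_front_def by blast
  obtain U where U: "{(x1, x2, t). t \<in> time_int T} \<subseteq> U" and \<psi>: "C_infinity_on U \<psi>"
    using psi_smooth by blast
  have U_t: "(x1, x2, t) \<in> U" for x1 x2
    using U t by blast
  have "((\<lambda>x. Dpt x t) has_integral \<psi> (b, fp b t, t) - \<psi> (a, fp a t, t)) {a..b}"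
    using kinematic u1_def u2_def t \<open>a < b\<close>
    by (intro has_integral_velocity_of_material_arc[OF \<psi> U_t C1p t]) auto
  moreover have "((\<lambda>x. Dmt x t) has_integral \<psi> (b, fm b t, t) - \<psi> (a, fm a t, t)) {a..b}"
    using kinematic u1_def u2_def t \<open>a < b\<close>
    by (intro has_integral_velocity_of_material_arc[OF \<psi> U_t C1m t]) auto
  ultimately have "integral {a..b} (\<lambda>x. Dpt x t - Dmt x t) =
      \<psi> (b, fp b t, t) - \<psi> (b, fm b t, t) + \<psi> (a, fm a t, t) - \<psi> (a, fp a t, t)"
    by (simp add: integral_unique[OF has_integral_diff])
  with has_real_derivative_integral_C1_with_partials[OF C1_with_partials_diff[OF C1p C1m] convex_time_int t]
  show "((\<lambda>s. integral {a..b} (\<lambda>x1. fp x1 s - fm x1 s)) has_real_derivative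
      \<psi> (b, fp b t, t) - \<psi> (b, fm b t, t) + \<psi> (a, fm a t, t) - \<psi> (a, fp a t, t)) (at t within time_int T)"
    by simp
qed

end
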